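(* For $j\ge 0$ define the permutation of $\{1,\dots,2j+5\}$ $$\alpha^{(j)}=2j+4,\ 3,\ \omega^{(j)},\ 1,\ 5,\ 2,$$ where $\omega^{(j)}$ is the concatenation, for $i=j,j-1,\dots,1$ (in this order), of the pairs $2i+2,\,2i+5$; that is, $\omega^{(j)}=2j+2,2j+5,2j,2j+3,2j-2,2j+1,\dots,6,9,4,7$ (and $\omega^{(0)}$ is empty, so $\alpha^{(0)}=43152$). Then: (i) the set $\{\alpha^{(j)}\}_{j\ge0}$ is an infinite antichain in the permutation pattern poset; (ii) no $\alpha^{(j)}$ is $2$-sortable; (iii) each $\alpha^{(j)}$ is minimal with this property: deleting any single entry of $\alpha^{(j)}$ (and standardizing) yields a $2$-sortable permutation.
   Context: The $\mathfrak{D}^k\mathfrak{I}$ machine consists of $k$ stacks $D_1,\dots,D_k$ (decreasing stacks) followed in series by a stack $I$ (increasing stack). The input permutation is read from left to right. The elements of each $D_i$ must be in decreasing order from top to bottom (top is largest), and those of $I$ in increasing order from top to bottom (top is smallest). Operations: $d_0$ pushes the next input element into $D_1$; $d_i$ ($1\le i\le k-1$) moves the top of $D_i$ to $D_{i+1}$; $d_k$ moves the top of $D_k$ to $I$; $d_{k+1}$ pops the top of $I$ and appends it to the output. An operation is legal if it respects the stack restrictions. A permutation $\pi$ is $k$-sortable if some sequence of legal operations of the $\mathfrak{D}^k\mathfrak{I}$ machine outputs the elements of $\pi$ in increasing order. The permutation pattern poset orders permutations by pattern containment $\sigma\le\pi$. *)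

theory Defs
  imports Main "HOL-Library.Sublist"
begin

text \<open>Permutations are lists of natural numbers (one-line notation, entries 1..n).\<close>

definition order_iso :: "nat list \<Rightarrow> nat list \<Rightarrow> bool" where
  "order_iso xs ys \<longleftrightarrow> length xs = length ys \<and>
     (\<forall>i<length xs. \<forall>j<length xs. (xs ! i < xs ! j) = (ys ! i < ys ! j))"

definition pattern_le :: "nat list \<Rightarrow> nat list \<Rightarrow> bool" where
  "pattern_le \<sigma> \<pi> \<longleftrightarrow> (\<exists>xs. subseq xs \<pi> \<and> order_iso xs \<sigma>)"

definition standardize :: "nat list \<Rightarrow> nat list" where
  "standardize xs = map (\<lambda>x. card {y \<in> set xs. y \<le> x}) xs"

definition delete_at :: "nat \<Rightarrow> nat list \<Rightarrow> nat list" where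
  "delete_at p xs = take p xs @ drop (Suc p) xs"

text \<open>Machine D^k I. State: (remaining input, [D_1,...,D_k], I, output).
  Stacks are lists with the top at the head. D stacks: top is largest;
  I: top is smallest.\<close>
type_synonym mstate = "nat list \<times> nat list list \<times> nat list \<times> nat list"

inductive mstep :: "nat \<Rightarrow> mstate \<Rightarrow> mstate \<Rightarrow> bool" for k :: nat where
  d0: "0 < k \<Longrightarrow> (D ! 0 = [] \<or> hd (D ! 0) < x) \<Longrightarrow>
       mstep k (x # inp, D, I, out) (inp, D[0 := x # D ! 0], I, out)"
| dmove: "Suc i < k \<Longrightarrow> D ! i \<noteq> [] \<Longrightarrow>
       (D ! Suc i = [] \<or> hd (D ! Suc i) < hd (D ! i)) \<Longrightarrow>
       mstep k (inp, D, I, out)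
         (inp, D[i := tl (D ! i), Suc i := hd (D ! i) # D ! Suc i], I, out)"
| dk: "0 < k \<Longrightarrow> D ! (k - 1) \<noteq> [] \<Longrightarrow>
       (I = [] \<or> hd (D ! (k - 1)) < hd I) \<Longrightarrow>
       mstep k (inp, D, I, out) (inp, D[k - 1 := tl (D ! (k - 1))], hd (D ! (k - 1)) # I, out)"
| dout: "mstep k (inp, D, x # I, out) (inp, D, I, out @ [x])"

definition sortable :: "nat \<Rightarrow> nat list \<Rightarrow> bool" where
  "sortable k \<pi> \<longleftrightarrow>
     (\<exists>D I. (mstep k)\<^sup>*\<^sup>* (\<pi>, replicate k [], [], []) ([], D, I, sort \<pi>))"

definition omega :: "nat \<Rightarrow> nat list" where
  "omega j = concat (map (\<lambda>i. [2*i+2, 2*i+5]) (rev [1..<j+1]))"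

definition alpha :: "nat \<Rightarrow> nat list" where
  "alpha j = [2*j+4, 3] @ omega j @ [1, 5, 2]"

lemma "alpha 0 = [4,3,1,5,2]" "alpha 2 = [8,3,6,9,4,7,1,5,2]"
  by (simp_all add: alpha_def omega_def upt_rec)

end

theory Submission
  imports Defs "HOL-Library.Multiset"
begin

(*
  Call a state of the D^2 I machine doomed if its output is already out of order or exceeds an
  entry still inside the machine, or if some c in I must wait for a smaller e that sits behind a
  larger d in the queue formed by D_2, D_1 (tops first) and the remaining input: c can only leave
  I after e has been output, d can only enter I after c has left, and since a move only ever lets
  an entry jump over smaller ones in that queue, e never overtakes d. Doomed states stay doomed.
  Started on alpha j, every move either dooms the machine or follows one forced run, which gets
  stuck with input left; so alpha j is not 2-sortable. Explicit runs, written as words in the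
  operations d_i, sort every one-point deletion of alpha j. Finally, 2-sortability is inherited
  by patterns, and a proper pattern of alpha j is a pattern of a one-point deletion of alpha j;
  hence no alpha i lies below a different alpha j.
*)

(* The operation d_i of the paper (with D_i = D ! (i - 1)); None marks an illegal move. *)
fun machine_op :: "nat \<Rightarrow> nat \<Rightarrow> mstate \<Rightarrow> mstate option" where
  "machine_op k i (inp, D, I, out) =
    (if i = 0 then
       (case inp of
          x # inp' \<Rightarrow> if 0 < k \<and> (D ! 0 = [] \<or> hd (D ! 0) < x)
                      then Some (inp', D[0 := x # D ! 0], I, out) else None
        | [] \<Rightarrow> None)
     else if i < k then
       (if D ! (i - 1) \<noteq> [] \<and> (D ! i = [] \<or> hd (D ! i) < hd (D ! (i - 1)))
        then Some (inp, D[i - 1 := tl (D ! (i - 1)), i := hd (D ! (i - 1)) # D ! i], I, out)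
        else None)
     else if i = k then
       (if D ! (k - 1) \<noteq> [] \<and> (I = [] \<or> hd (D ! (k - 1)) < hd I)
        then Some (inp, D[k - 1 := tl (D ! (k - 1))], hd (D ! (k - 1)) # I, out) else None)
     else if i = Suc k then
       (case I of x # I' \<Rightarrow> Some (inp, D, I', out @ [x]) | [] \<Rightarrow> None)
     else None)"

lemma machine_op_mstep: "machine_op k i s = Some t \<Longrightarrow> mstep k s t"
proof -
  assume op: "machine_op k i s = Some t"
  obtain inp D I out where s: "s = (inp, D, I, out)" by (cases s) blast
  consider "i = 0" | "0 < i" "i < k" | "i = k" "0 < k" | "i = Suc k"
    using op s by (fastforce split: if_splits)
  then show "mstep k s t"
  proof cases
    case 1
    then show ?thesis using op s by (auto split: list.splits if_splits intro: mstep.d0)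
  next
    case 2
    then have "Suc (i - 1) < k" "Suc (i - 1) = i" by auto
    then show ?thesis using op s 2 mstep.dmove[of "i - 1" k D inp I out] by (auto split: if_splits)
  next
    case 3
    then show ?thesis using op s mstep.dk[of k D I inp out] by (auto split: if_splits)
  next
    case 4
    then show ?thesis using op s by (auto split: list.splits if_splits intro: mstep.dout)
  qed
qed

lemma mstep_machine_op:
  assumes "mstep k s t" obtains i where "i \<le> Suc k" "machine_op k i s = Some t"
  using assms
proof cases
  case (dmove i D inp I out)
  then show ?thesis using that[of "Suc i"] by auto
next
  case (dk D I inp out)
  then show ?thesis using that[of k] by auto
next
  case (dout inp D x I out)
  then show ?thesis using that[of "Suc k"] by auto
qed (use that[of 0] in auto)

fun exec_ops :: "nat \<Rightarrow> nat list \<Rightarrow> mstate \<Rightarrow> mstate option" where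
  "exec_ops k [] s = Some s"
| "exec_ops k (i # is) s = Option.bind (machine_op k i s) (exec_ops k is)"

lemma exec_ops_steps: "exec_ops k ops s = Some t \<Longrightarrow> (mstep k)\<^sup>*\<^sup>* s t"
proof (induction ops arbitrary: s)
  case (Cons i ops)
  then obtain u where "machine_op k i s = Some u" "exec_ops k ops u = Some t"
    by (auto split: Option.bind_splits)
  then show ?case
    using Cons.IH machine_op_mstep converse_rtranclp_into_rtranclp[of "mstep k"] by metis
qed simp

fun content :: "mstate \<Rightarrow> nat multiset" where
  "content (inp, D, I, out) = mset inp + (\<Sum>d\<leftarrow>D. mset d) + mset I + mset out"

fun valid_state :: "nat \<Rightarrow> mstate \<Rightarrow> bool" where
  "valid_state k (inp, D, I, out) \<longleftrightarrow>
     length D = k \<and> (\<forall>d \<in> set D. sorted_wrt (>) d) \<and> sorted_wrt (<) I"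

lemma sum_list_update_add:
  "i < length xs \<Longrightarrow> sum_list (xs[i := v]) + xs ! i = sum_list xs + (v :: 'a :: comm_monoid_add)"
  by (induction xs arbitrary: i) (auto simp: add_ac split: nat.split)

lemma sorted_wrt_greater_Cons:
  "sorted_wrt (>) (d :: nat list) \<Longrightarrow> d = [] \<or> hd d < x \<Longrightarrow> sorted_wrt (>) (x # d)"
  by (cases d) auto

lemma sorted_wrt_less_Cons:
  "sorted_wrt (<) (I :: nat list) \<Longrightarrow> I = [] \<or> x < hd I \<Longrightarrow> sorted_wrt (<) (x # I)"
  by (cases I) auto

lemma sorted_wrt_tl: "sorted_wrt P xs \<Longrightarrow> sorted_wrt P (tl xs)"
  by (cases xs) auto

lemma hd_greatest: "sorted_wrt (>) (d :: nat list) \<Longrightarrow> y \<in> set d \<Longrightarrow> y \<le> hd d"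
  by (cases d) auto

lemma hd_least: "sorted_wrt (<) (I :: nat list) \<Longrightarrow> y \<in> set I \<Longrightarrow> hd I \<le> y"
  by (cases I) auto

lemma mstep_valid_state:
  assumes "mstep k s t" "valid_state k s" shows "valid_state k t"
  using assms
proof (induction rule: mstep.induct)
  case (d0 D x inp I out)
  then have "sorted_wrt (>) (x # D ! 0)" by (intro sorted_wrt_greater_Cons) auto
  with d0 show ?case by (auto dest!: set_update_subset_insert[THEN subsetD])
next
  case (dmove i D inp I out)
  then have "sorted_wrt (>) (D ! i)" "sorted_wrt (>) (D ! Suc i)" by auto
  with dmove have "sorted_wrt (>) (tl (D ! i))" "sorted_wrt (>) (hd (D ! i) # D ! Suc i)"
    using sorted_wrt_greater_Cons[of "D ! Suc i" "hd (D ! i)"] by (auto simp: sorted_wrt_tl)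
  with dmove show ?case by (auto dest!: set_update_subset_insert[THEN subsetD])
next
  case (dk D I inp out)
  then have "sorted_wrt (>) (D ! (k - 1))" by auto
  with dk have "sorted_wrt (>) (tl (D ! (k - 1)))" "sorted_wrt (<) (hd (D ! (k - 1)) # I)"
    using sorted_wrt_less_Cons[of I "hd (D ! (k - 1))"] by (auto simp: sorted_wrt_tl)
  with dk show ?case by (auto dest!: set_update_subset_insert[THEN subsetD])
qed simp

lemma mstep_content:
  assumes "mstep k s t" "valid_state k s" shows "content t = content s"
  using assms
proof (induction rule: mstep.induct)
  case (d0 D x inp I out)
  then show ?case
    using sum_list_update_add[of 0 "map mset D" "mset (x # D ! 0)"] by (simp add: map_update add_ac)
next
  case (dmove i D inp I out)
  let ?D' = "D[i := tl (D ! i)]"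
  have "(\<Sum>d\<leftarrow>?D'[Suc i := hd (D ! i) # D ! Suc i]. mset d) + mset (D ! Suc i)
        = (\<Sum>d\<leftarrow>?D'. mset d) + mset (hd (D ! i) # D ! Suc i)"
    using dmove sum_list_update_add[of "Suc i" "map mset ?D'"] by (simp add: map_update)
  moreover have "(\<Sum>d\<leftarrow>?D'. mset d) + mset (D ! i) = (\<Sum>d\<leftarrow>D. mset d) + mset (tl (D ! i))"
    using dmove sum_list_update_add[of i "map mset D"] by (simp add: map_update)
  moreover have "mset (D ! i) = add_mset (hd (D ! i)) (mset (tl (D ! i)))"
    using dmove by (cases "D ! i") auto
  ultimately show ?case by (simp add: add_ac)
next
  case (dk D I inp out)
  have "(\<Sum>d\<leftarrow>D[k - 1 := tl (D ! (k - 1))]. mset d) + mset (D ! (k - 1))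
        = (\<Sum>d\<leftarrow>D. mset d) + mset (tl (D ! (k - 1)))"
    using dk sum_list_update_add[of "k - 1" "map mset D"] by (simp add: map_update)
  moreover have "mset (D ! (k - 1)) = add_mset (hd (D ! (k - 1))) (mset (tl (D ! (k - 1))))"
    using dk by (cases "D ! (k - 1)") auto
  ultimately show ?case by (simp add: add_ac)
qed simp

lemma reachable_invariants:
  assumes "(mstep k)\<^sup>*\<^sup>* (\<pi>, replicate k [], [], []) s"
  shows "valid_state k s" "content s = mset \<pi>"
  using assms
proof (induction rule: rtranclp_induct)
  case base
  show "valid_state k (\<pi>, replicate k [], [], [])" "content (\<pi>, replicate k [], [], []) = mset \<pi>"
    by (induction k) simp_all
next
  case (step s t)
  show "valid_state k t" "content t = mset \<pi>"
    using step mstep_valid_state mstep_content by metis+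
qed

section \<open>Sortability is closed under patterns\<close>

fun map_state :: "(nat \<Rightarrow> nat) \<Rightarrow> mstate \<Rightarrow> mstate" where
  "map_state f (inp, D, I, out) = (map f inp, map (map f) D, map f I, map f out)"

lemma hd_stack_in_content:
  assumes "valid_state k (inp, D, I, out)" "i < k" "D ! i \<noteq> []"
  shows "hd (D ! i) \<in> set_mset (content (inp, D, I, out))"
proof -
  have "D ! i \<in> set D" "hd (D ! i) \<in> set (D ! i)" using assms by simp_all
  then show ?thesis by auto
qed

lemma mstep_map_state:
  assumes "mstep k s t" "valid_state k s" "strict_mono_on (set_mset (content s)) f"
  shows "mstep k (map_state f s) (map_state f t)"
  using assms
proof (induction rule: mstep.induct)
  case (d0 D x inp I out)
  have "map f (D ! 0) = [] \<or> hd (map f (D ! 0)) < f x"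
  proof (cases "D ! 0 = []")
    case False
    with d0 have "hd (D ! 0) < x" by simp
    moreover from False d0 have "hd (D ! 0) \<in> set_mset (content (x # inp, D, I, out))"
      by (intro hd_stack_in_content) auto
    ultimately have "f (hd (D ! 0)) < f x" using d0.prems(2) by (auto intro: strict_mono_onD)
    with False show ?thesis by (simp add: hd_map)
  qed simp
  with d0 show ?case using mstep.d0[of k "map (map f) D" "f x"] by (simp add: map_update)
next
  case (dmove i D inp I out)
  have "map f (D ! Suc i) = [] \<or> hd (map f (D ! Suc i)) < f (hd (D ! i))"
  proof (cases "D ! Suc i = []")
    case False
    with dmove have "hd (D ! Suc i) < hd (D ! i)" by simp
    moreover have "hd (D ! Suc i) \<in> set_mset (content (inp, D, I, out))"
      by (rule hd_stack_in_content) (use False dmove in auto)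
    moreover have "hd (D ! i) \<in> set_mset (content (inp, D, I, out))"
      by (rule hd_stack_in_content) (use dmove in auto)
    ultimately have "f (hd (D ! Suc i)) < f (hd (D ! i))"
      using dmove.prems(2) by (auto intro: strict_mono_onD)
    with False show ?thesis by (simp add: hd_map)
  qed simp
  with dmove show ?case
    using mstep.dmove[of i k "map (map f) D"] by (simp add: map_update hd_map map_tl)
next
  case (dk D I inp out)
  have "map f I = [] \<or> f (hd (D ! (k - 1))) < hd (map f I)"
  proof (cases "I = []")
    case False
    with dk have "hd (D ! (k - 1)) < hd I" by simp
    moreover have "hd (D ! (k - 1)) \<in> set_mset (content (inp, D, I, out))"
      by (rule hd_stack_in_content) (use dk in auto)
    moreover have "hd I \<in> set_mset (content (inp, D, I, out))" using False by simp
    ultimately have "f (hd (D ! (k - 1))) < f (hd I)"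
      using dk.prems(2) by (auto intro: strict_mono_onD)
    with False show ?thesis by (simp add: hd_map)
  qed simp
  with dk show ?case
    using mstep.dk[of k "map (map f) D" "map f I"] by (simp add: map_update hd_map map_tl)
qed (simp add: mstep.dout)

fun filter_state :: "(nat \<Rightarrow> bool) \<Rightarrow> mstate \<Rightarrow> mstate" where
  "filter_state P (inp, D, I, out) = (filter P inp, map (filter P) D, filter P I, filter P out)"

lemma hd_filter_less:
  assumes "sorted_wrt (>) (d :: nat list)" "d = [] \<or> hd d < x"
  shows "filter P d = [] \<or> hd (filter P d) < x"
proof (cases "filter P d")
  case (Cons y ys)
  then have "y \<in> set d" by (metis filter_eq_ConsD in_set_conv_decomp)
  with assms Cons show ?thesis using hd_greatest[OF assms(1)] by fastforce
qed simp

lemma less_hd_filter: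
  assumes "sorted_wrt (<) (I :: nat list)" "I = [] \<or> x < hd I"
  shows "filter P I = [] \<or> x < hd (filter P I)"
proof (cases "filter P I")
  case (Cons y ys)
  then have "y \<in> set I" by (metis filter_eq_ConsD in_set_conv_decomp)
  with assms Cons show ?thesis using hd_least[OF assms(1)] by fastforce
qed simp

lemma mstep_filter_state:
  assumes "mstep k s t" "valid_state k s"
  shows "filter_state P t = filter_state P s \<or> mstep k (filter_state P s) (filter_state P t)"
  using assms
proof (induction rule: mstep.induct)
  case (d0 D x inp I out)
  show ?case
  proof (cases "P x")
    case True
    from d0 have "filter P (D ! 0) = [] \<or> hd (filter P (D ! 0)) < x"
      by (intro hd_filter_less) auto
    with d0 True show ?thesis
      using mstep.d0[of k "map (filter P) D" x] by (simp add: map_update)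
  next
    case False
    from d0 have "(map (filter P) D)[0 := filter P (D ! 0)] = map (filter P) D"
      by (intro nth_equalityI) (auto simp: nth_list_update)
    with False show ?thesis by (simp add: map_update)
  qed
next
  case (dmove i D inp I out)
  then obtain x r where xr: "D ! i = x # r" by (cases "D ! i") auto
  show ?case
  proof (cases "P x")
    case True
    from dmove xr have "filter P (D ! Suc i) = [] \<or> hd (filter P (D ! Suc i)) < x"
      by (intro hd_filter_less) auto
    with dmove xr True show ?thesis
      using mstep.dmove[of i k "map (filter P) D"] by (simp add: map_update)
  next
    case False
    from dmove xr False
    have "(map (filter P) D)[i := filter P r, Suc i := filter P (D ! Suc i)] = map (filter P) D"
      by (intro nth_equalityI) (auto simp: nth_list_update)
    with dmove xr False show ?thesis by (simp add: map_update)
  qed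
next
  case (dk D I inp out)
  then obtain x r where xr: "D ! (k - 1) = x # r" by (cases "D ! (k - 1)") auto
  show ?case
  proof (cases "P x")
    case True
    from dk xr have "filter P I = [] \<or> x < hd (filter P I)"
      by (intro less_hd_filter) auto
    with dk xr True show ?thesis
      using mstep.dk[of k "map (filter P) D" "filter P I"] by (simp add: map_update)
  next
    case False
    from dk xr False have "(map (filter P) D)[k - 1 := filter P r] = map (filter P) D"
      by (intro nth_equalityI) (auto simp: nth_list_update)
    with dk xr False show ?thesis by (simp add: map_update)
  qed
qed (auto intro: mstep.dout)

lemma sort_map_strict_mono_on:
  assumes "strict_mono_on (set xs) f" shows "sort (map f xs) = map f (sort xs)"
proof (rule properties_for_sort)
  have "mono_on (set xs) f" using assms by (rule strict_mono_on_imp_mono_on)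
  then show "sorted (map f (sort xs))"
    unfolding sorted_map
    using sorted_wrt_mono_rel[of "sort xs" "(\<le>)" "\<lambda>x y. f x \<le> f y"] by (auto intro: mono_onD)
qed simp

lemma sortable_map:
  assumes "strict_mono_on (set \<pi>) f" "sortable k \<pi>"
  shows "sortable k (map f \<pi>)"
proof -
  from assms(2) obtain D I where run: "(mstep k)\<^sup>*\<^sup>* (\<pi>, replicate k [], [], []) ([], D, I, sort \<pi>)"
    unfolding sortable_def by blast
  have "(mstep k)\<^sup>*\<^sup>* (map_state f (\<pi>, replicate k [], [], [])) (map_state f s)"
    if "(mstep k)\<^sup>*\<^sup>* (\<pi>, replicate k [], [], []) s" for s
    using that
  proof (induction rule: rtranclp_induct)
    case (step s t)
    then have "mstep k (map_state f s) (map_state f t)"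
      using reachable_invariants[OF step(1)] assms(1) by (intro mstep_map_state) auto
    with step.IH show ?case by simp
  qed simp
  from this[OF run] assms(1) show ?thesis
    unfolding sortable_def by (auto simp: sort_map_strict_mono_on map_replicate_const)
qed

lemma sortable_filter:
  assumes "sortable k \<pi>" shows "sortable k (filter P \<pi>)"
proof -
  from assms obtain D I where run: "(mstep k)\<^sup>*\<^sup>* (\<pi>, replicate k [], [], []) ([], D, I, sort \<pi>)"
    unfolding sortable_def by blast
  have "(mstep k)\<^sup>*\<^sup>* (filter_state P (\<pi>, replicate k [], [], [])) (filter_state P s)"
    if "(mstep k)\<^sup>*\<^sup>* (\<pi>, replicate k [], [], []) s" for s
    using that
  proof (induction rule: rtranclp_induct)
    case (step s t)
    then show ?case
      using mstep_filter_state[OF step(2) reachable_invariants(1)[OF step(1)], of P]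
      by (metis rtranclp.rtrancl_into_rtrancl)
  qed simp
  from this[OF run] show ?thesis
    unfolding sortable_def by (auto simp: filter_sort map_replicate_const)
qed

lemma sortable_order_iso:
  assumes "order_iso xs ys" "distinct xs" "sortable k xs"
  shows "sortable k ys"
proof -
  define f where "f x = the (map_of (zip xs ys) x)" for x
  have len: "length xs = length ys" using assms(1) unfolding order_iso_def by simp
  have f_nth: "f (xs ! i) = ys ! i" if "i < length xs" for i
    unfolding f_def using map_of_zip_nth[OF len assms(2)] that len by simp
  have "map f xs = ys" by (rule nth_equalityI) (use len f_nth in auto)
  moreover have "strict_mono_on (set xs) f"
  proof (rule strict_mono_onI)
    fix x y assume "x \<in> set xs" "y \<in> set xs" "x < y"
    then obtain i j where "i < length xs" "j < length xs" "x = xs ! i" "y = xs ! j"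
      by (metis in_set_conv_nth)
    with \<open>x < y\<close> assms(1) f_nth show "f x < f y" unfolding order_iso_def by auto
  qed
  ultimately show ?thesis using sortable_map[OF _ assms(3)] by blast
qed

lemma sortable_pattern_le:
  assumes "pattern_le \<sigma> \<pi>" "distinct \<pi>" "sortable k \<pi>"
  shows "sortable k \<sigma>"
proof -
  obtain xs where "subseq xs \<pi>" "order_iso xs \<sigma>"
    using assms(1) unfolding pattern_le_def by blast
  moreover from \<open>subseq xs \<pi>\<close> assms(2) have "xs = filter (\<lambda>x. x \<in> set xs) \<pi>"
    by (metis filter_in_nths subseq_conv_nths)
  ultimately show ?thesis
    using sortable_order_iso sortable_filter[OF assms(3)] assms(2) by (metis distinct_filter)
qed

lemma order_iso_standardize: "order_iso xs (standardize xs)"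
proof -
  have rank_less: "card {y \<in> set xs. y \<le> x} < card {y \<in> set xs. y \<le> z} \<longleftrightarrow> x < z"
    if "x \<in> set xs" "z \<in> set xs" for x z
  proof
    assume "x < z"
    with that have "{y \<in> set xs. y \<le> x} \<subseteq> {y \<in> set xs. y \<le> z}"
      "z \<in> {y \<in> set xs. y \<le> z} - {y \<in> set xs. y \<le> x}" by auto
    then have "{y \<in> set xs. y \<le> x} \<subset> {y \<in> set xs. y \<le> z}" by blast
    then show "card {y \<in> set xs. y \<le> x} < card {y \<in> set xs. y \<le> z}"
      by (intro psubset_card_mono) auto
  next
    assume "card {y \<in> set xs. y \<le> x} < card {y \<in> set xs. y \<le> z}"
    moreover have "z \<le> x \<Longrightarrow> card {y \<in> set xs. y \<le> z} \<le> card {y \<in> set xs. y \<le> x}"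
      by (intro card_mono) auto
    ultimately show "x < z" by linarith
  qed
  show ?thesis unfolding order_iso_def standardize_def by (auto simp: rank_less)
qed

lemma distinct_delete_at: "distinct xs \<Longrightarrow> distinct (delete_at p xs)"
  unfolding delete_at_def by (simp add: set_take_disj_set_drop_if_distinct)

lemma subseq_delete_at:
  "subseq xs ys \<Longrightarrow> length xs < length ys \<Longrightarrow> \<exists>p < length ys. subseq xs (delete_at p ys)"
proof (induction ys arbitrary: xs)
  case (Cons y ys)
  show ?case
  proof (cases "subseq xs ys")
    case True
    then show ?thesis by (intro exI[of _ 0]) (simp add: delete_at_def)
  next
    case False
    with Cons.prems obtain xs' where xs: "xs = y # xs'" "subseq xs' ys"
      by (cases xs) (auto split: if_split_asm)
    with Cons obtain p where "p < length ys" "subseq xs' (delete_at p ys)" by auto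
    with xs show ?thesis by (intro exI[of _ "Suc p"]) (simp add: delete_at_def)
  qed
qed simp

lemma pattern_le_delete_at:
  assumes "pattern_le \<sigma> \<pi>" "length \<sigma> < length \<pi>"
  shows "\<exists>p < length \<pi>. pattern_le \<sigma> (delete_at p \<pi>)"
proof -
  obtain xs where "subseq xs \<pi>" "order_iso xs \<sigma>"
    using assms(1) unfolding pattern_le_def by blast
  moreover from \<open>order_iso xs \<sigma>\<close> have "length xs = length \<sigma>" unfolding order_iso_def by simp
  ultimately show ?thesis
    using subseq_delete_at[of xs \<pi>] assms(2) unfolding pattern_le_def by fastforce
qed

lemma pattern_le_length: "pattern_le \<sigma> \<pi> \<Longrightarrow> length \<sigma> \<le> length \<pi>"
  unfolding pattern_le_def order_iso_def by (auto dest: list_emb_length)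

(* Once input and D stacks are empty, popping I appends it to the output. *)
definition sorts_from :: "nat \<Rightarrow> mstate \<Rightarrow> bool" where
  "sorts_from k s \<longleftrightarrow> (\<exists>I out. (mstep k)\<^sup>*\<^sup>* s ([], replicate k [], I, out) \<and> sorted (out @ I))"

lemma sorts_fromI: "sorted (out @ I) \<Longrightarrow> sorts_from k ([], replicate k [], I, out)"
  unfolding sorts_from_def by blast

lemma sorts_from2I: "sorted (out @ I) \<Longrightarrow> sorts_from 2 ([], [[], []], I, out)"
  using sorts_fromI[of out I 2] by (simp add: numeral_2_eq_2)

lemma sorts_from_steps: "(mstep k)\<^sup>*\<^sup>* s t \<Longrightarrow> sorts_from k t \<Longrightarrow> sorts_from k s"
  unfolding sorts_from_def by (meson rtranclp_trans)

lemma sorts_from_exec_ops: "exec_ops k ops s = Some t \<Longrightarrow> sorts_from k t \<Longrightarrow> sorts_from k s"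
  using exec_ops_steps sorts_from_steps by blast

lemma steps_output_all: "(mstep k)\<^sup>*\<^sup>* (inp, D, I, out) (inp, D, [], out @ I)"
proof (induction I arbitrary: out)
  case (Cons x I)
  have "(mstep k)\<^sup>*\<^sup>* (inp, D, I, out @ [x]) (inp, D, [], out @ x # I)"
    using Cons.IH[of "out @ [x]"] by simp
  then show ?case by (rule converse_rtranclp_into_rtranclp[of "mstep k", OF mstep.dout])
qed simp

lemma sortable_if_sorts_from:
  assumes "sorts_from k (\<pi>, replicate k [], [], [])" shows "sortable k \<pi>"
proof -
  obtain I out where run: "(mstep k)\<^sup>*\<^sup>* (\<pi>, replicate k [], [], []) ([], replicate k [], I, out)"
    and "sorted (out @ I)"
    using assms unfolding sorts_from_def by blast
  then have run': "(mstep k)\<^sup>*\<^sup>* (\<pi>, replicate k [], [], []) ([], replicate k [], [], out @ I)"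
    using steps_output_all rtranclp_trans by fast
  have "mset (out @ I) = mset \<pi>"
    using reachable_invariants(2)[OF run'] by (induction k) simp_all
  with \<open>sorted (out @ I)\<close> have "sort \<pi> = out @ I" by (intro properties_for_sort)
  with run' show ?thesis unfolding sortable_def by auto
qed

lemma omega_0 [simp]: "omega 0 = []"
  by (simp add: omega_def)

lemma omega_Suc: "omega (Suc k) = [2*k+4, 2*k+7] @ omega k"
  by (simp add: omega_def)

lemma omega_bounds: "x \<in> set (omega k) \<Longrightarrow> 4 \<le> x \<and> x \<le> 2*k+5 \<and> x \<noteq> 5 \<and> x \<noteq> 2*k+4"
  by (induction k) (auto simp: omega_def)

lemma distinct_omega: "distinct (omega k)"
proof (induction k)
  case (Suc k)
  have "2*k+4 \<notin> set (omega k)" "2*k+7 \<notin> set (omega k)" using omega_bounds by fastforce+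
  with Suc show ?case by (simp add: omega_Suc)
qed simp

lemma distinct_alpha: "distinct (alpha j)"
  using distinct_omega[of j] omega_bounds[of _ j] by (fastforce simp: alpha_def)

lemma length_omega: "length (omega j) = 2*j"
  by (induction j) (simp_all add: omega_Suc)

lemma length_alpha: "length (alpha j) = 2*j+5"
  by (simp add: alpha_def length_omega)

lemma subseq_omega_tail: "subseq [2*i+5, 2] (omega i @ [1, 5, 2])"
  by (cases i) (simp_all add: omega_Suc subseq_singleton_left)

lemma omega_tail_hd_le: "x # r = omega k @ [1, 5, 2] \<Longrightarrow> x \<le> 2*k+2"
  by (cases k) (auto simp: omega_Suc)

section \<open>No alpha j is 2-sortable\<close>

lemma mstep2E:
  assumes "mstep 2 (inp, [a, b], I, out) t"
  obtains (d0) x inp' where "inp = x # inp'" "a = [] \<or> hd a < x" "t = (inp', [x # a, b], I, out)"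
  | (d1) x a' where "a = x # a'" "b = [] \<or> hd b < x" "t = (inp, [a', x # b], I, out)"
  | (d2) x b' where "b = x # b'" "I = [] \<or> x < hd I" "t = (inp, [a, b'], x # I, out)"
  | (d3) x I' where "I = x # I'" "t = (inp, [a, b], I', out @ [x])"
proof -
  obtain i where "i \<le> 3" "machine_op 2 i (inp, [a, b], I, out) = Some t"
    using assms by (rule mstep_machine_op) simp
  moreover have "i = 0 \<or> i = 1 \<or> i = 2 \<or> i = 3" using \<open>i \<le> 3\<close> by presburger
  ultimately consider "machine_op 2 0 (inp, [a, b], I, out) = Some t"
    | "machine_op 2 1 (inp, [a, b], I, out) = Some t"
    | "machine_op 2 2 (inp, [a, b], I, out) = Some t"
    | "machine_op 2 3 (inp, [a, b], I, out) = Some t"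
    by blast
  then show ?thesis
  proof cases
    case 1 then show ?thesis by (auto split: list.splits if_splits intro: d0)
  next
    case 2 then show ?thesis by (cases a) (auto split: if_splits intro: d1)
  next
    case 3 then show ?thesis by (cases b) (auto split: if_splits intro: d2)
  next
    case 4 then show ?thesis by (auto split: list.splits intro: d3)
  qed
qed

lemma subseq_pair_move:
  assumes "subseq [d, e] (b @ x # w)" "x = e \<Longrightarrow> d \<notin> set b"
  shows "subseq [d, e] (x # b @ w)"
proof -
  from assms(1) obtain xs1 xs2 where split: "[d, e] = xs1 @ xs2" "subseq xs1 b" "subseq xs2 (x # w)"
    by (rule subseq_appendE)
  show ?thesis
  proof (cases xs1)
    case Nil
    with split have dew: "subseq [d, e] (x # w)" by simp
    show ?thesis
    proof (cases "x = d")
      case True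
      with dew have "subseq [e] (b @ w)" by (simp add: subseq_drop_many)
      with True show ?thesis by simp
    next
      case False
      with dew have "subseq [d, e] (b @ w)" by (simp add: subseq_drop_many)
      then show ?thesis by (rule list_emb_Cons)
    qed
  next
    case (Cons y ys)
    with split(1) have "xs1 = [d] \<and> xs2 = [e] \<or> xs1 = [d, e] \<and> xs2 = []"
      by (cases ys) simp_all
    then show ?thesis
    proof (elim disjE conjE)
      assume "xs1 = [d]" "xs2 = [e]"
      with split have "subseq [d] b" "subseq [e] (x # w)" by simp_all
      moreover from \<open>subseq [d] b\<close> assms(2) have "e \<noteq> x" by (auto simp: subseq_singleton_left)
      ultimately have "subseq [e] w" by simp
      with \<open>subseq [d] b\<close> have "subseq ([d] @ [e]) (b @ w)" by (rule list_emb_append_mono)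
      then show ?thesis by (intro list_emb_Cons) simp
    next
      assume "xs1 = [d, e]"
      with split have "subseq [d, e] (b @ w)" by (simp add: subseq_rev_drop_many)
      then show ?thesis by (rule list_emb_Cons)
    qed
  qed
qed

lemma subseq_pair_Cons: "subseq [d, e] (x # w) \<Longrightarrow> x \<noteq> d \<Longrightarrow> subseq [d, e] w"
  by simp

lemma subseq_pair_jump:
  assumes "subseq [d, e] (u @ v @ x # w)" "x = e \<Longrightarrow> d \<notin> set v"
  shows "subseq [d, e] (u @ x # v @ w)"
  using assms(1)
proof (induction u)
  case Nil
  from Nil assms(2) show ?case unfolding append_Nil by (rule subseq_pair_move)
next
  case (Cons y u)
  then show ?case by (cases "y = d") (simp_all add: subseq_singleton_left)
qed

(* concat (rev D) @ inp is the queue D_k, ..., D_1, input, each stack listed top first. *)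
fun doomed :: "mstate \<Rightarrow> bool" where
  "doomed (inp, D, I, out) \<longleftrightarrow>
     \<not> sorted out
   \<or> (\<exists>z \<in> set out. \<exists>y \<in> set (concat (rev D) @ inp) \<union> set I. y < z)
   \<or> (\<exists>c \<in> set I. \<exists>d e. e < c \<and> c < d \<and> subseq [d, e] (concat (rev D) @ inp))"

declare doomed.simps [simp del]

lemma doomed_transfer:
  assumes "doomed (inp, D, I, out)"
    and "set (concat (rev D) @ inp) \<union> set I = set (concat (rev D') @ inp') \<union> set I'"
    and "set I \<subseteq> set I'"
    and "\<And>c d e. c \<in> set I \<Longrightarrow> e < c \<Longrightarrow> c < d \<Longrightarrow> subseq [d, e] (concat (rev D) @ inp) \<Longrightarrow>
           subseq [d, e] (concat (rev D') @ inp')"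
  shows "doomed (inp', D', I', out)"
proof -
  from assms(1) consider "\<not> sorted out"
    | "\<exists>z \<in> set out. \<exists>y \<in> set (concat (rev D) @ inp) \<union> set I. y < z"
    | c d e where "c \<in> set I" "e < c" "c < d" "subseq [d, e] (concat (rev D) @ inp)"
    by (auto simp: doomed.simps)
  then show ?thesis
  proof cases
    case 2 with assms(2) show ?thesis by (simp only: doomed.simps) blast
  next
    case 3 with assms(3,4) show ?thesis by (simp only: doomed.simps) blast
  qed (simp add: doomed.simps)
qed

lemma doomed_unsorted: "\<not> sorted out \<Longrightarrow> doomed (inp, D, I, out)"
  by (simp add: doomed.simps)

lemma doomed_by_output:
  "z \<in> set out \<Longrightarrow> y \<in> set (concat (rev D) @ inp) \<union> set I \<Longrightarrow> y < z \<Longrightarrow> doomed (inp, D, I, out)"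
  by (auto simp: doomed.simps)

lemma doomed_by_block:
  "c \<in> set I \<Longrightarrow> e < c \<Longrightarrow> c < d \<Longrightarrow> subseq [d, e] (concat (rev D) @ inp) \<Longrightarrow>
   doomed (inp, D, I, out)"
  by (auto simp: doomed.simps)

lemma doomed_output:
  assumes "doomed (inp, D, x # I, out)" shows "doomed (inp, D, I, out @ [x])"
proof -
  let ?q = "concat (rev D) @ inp"
  from assms consider "\<not> sorted out"
    | z y where "z \<in> set out" "y \<in> set ?q \<union> set (x # I)" "y < z"
    | c d e where "c \<in> set (x # I)" "e < c" "c < d" "subseq [d, e] ?q"
    by (simp only: doomed.simps) fastforce
  then show ?thesis
  proof cases
    case 1
    then show ?thesis by (intro doomed_unsorted) (simp add: sorted_append)
  next
    case (2 z y)
    show ?thesis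
    proof (cases "y = x")
      case True
      with 2 show ?thesis by (intro doomed_unsorted) (auto simp: sorted_append intro!: bexI[of _ z])
    next
      case False
      with 2 show ?thesis by (intro doomed_by_output[of z _ y]) auto
    qed
  next
    case (3 c d e)
    show ?thesis
    proof (cases "c = x")
      case True
      from 3 have "e \<in> set ?q" using list_emb_set[OF \<open>subseq [d, e] ?q\<close>, of e] by auto
      with 3 True show ?thesis by (intro doomed_by_output[of x _ e]) auto
    next
      case False
      with 3 show ?thesis by (intro doomed_by_block[of c _ e d]) auto
    qed
  qed
qed

lemma mstep_doomed:
  assumes step: "mstep 2 s t" and "valid_state 2 s" and doomed: "doomed s"
  shows "doomed t"
proof -
  obtain inp a b I out where s: "s = (inp, [a, b], I, out)" and
    sa: "sorted_wrt (>) a" and sb: "sorted_wrt (>) b" and sI: "sorted_wrt (<) I"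
    using \<open>valid_state 2 s\<close> by (cases s) (auto simp: length_Suc_conv numeral_2_eq_2)
  from step[unfolded s] show ?thesis
  proof (cases rule: mstep2E)
    case (d0 x inp')
    show ?thesis unfolding d0(3)
    proof (rule doomed_transfer[OF doomed[unfolded s d0(1)]])
      fix c d e assume "e < c" "c < d" "subseq [d, e] (concat (rev [a, b]) @ x # inp')"
      then show "subseq [d, e] (concat (rev [x # a, b]) @ inp')"
        using subseq_pair_jump[of d e b a x inp'] d0(2) hd_greatest[OF sa] by fastforce
    qed auto
  next
    case (d1 x a')
    show ?thesis unfolding d1(3)
    proof (rule doomed_transfer[OF doomed[unfolded s d1(1)]])
      fix c d e assume "e < c" "c < d" "subseq [d, e] (concat (rev [x # a', b]) @ inp)"
      then show "subseq [d, e] (concat (rev [a', x # b]) @ inp)"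
        using subseq_pair_jump[of d e "[]" b x "a' @ inp"] d1(2) hd_greatest[OF sb] by fastforce
    qed auto
  next
    case (d2 x b')
    show ?thesis unfolding d2(3)
    proof (rule doomed_transfer[OF doomed[unfolded s d2(1)]])
      fix c d e assume "c \<in> set I" "c < d" "subseq [d, e] (concat (rev [a, x # b']) @ inp)"
      moreover have "x \<noteq> d"
        using d2(2) hd_least[OF sI \<open>c \<in> set I\<close>] \<open>c \<in> set I\<close> \<open>c < d\<close> by auto
      ultimately show "subseq [d, e] (concat (rev [a, b']) @ inp)"
        using subseq_pair_Cons by simp
    qed auto
  next
    case (d3 x I')
    then show ?thesis using doomed_output[of inp "[a, b]" x I' out] doomed s by simp
  qed
qed

(* The states reachable from alpha j without being doomed: the run must start with d0 d1 d0 and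
   then treat each pair 2i+2, 2i+5 of omega j by d0 d0 d1 d2 d2 d1. *)
inductive forced :: "nat \<Rightarrow> mstate \<Rightarrow> bool" for j where
  start: "forced j (alpha j, [[], []], [], [])"
| top_read: "forced j (3 # omega j @ [1, 5, 2], [[2*j+4], []], [], [])"
| top_moved: "forced j (3 # omega j @ [1, 5, 2], [[], [2*j+4]], [], [])"
| round: "i \<le> j \<Longrightarrow> forced j (omega i @ [1, 5, 2], [[3], [2*i+4]], [2*i+6..<2*j+6], [])"
| pair_read: "k < j \<Longrightarrow>
    forced j ((2*k+7) # omega k @ [1, 5, 2], [[2*k+4, 3], [2*k+6]], [2*k+8..<2*j+6], [])"
| pair_read2: "k < j \<Longrightarrow>
    forced j (omega k @ [1, 5, 2], [[2*k+7, 2*k+4, 3], [2*k+6]], [2*k+8..<2*j+6], [])"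
| pair_moved: "k < j \<Longrightarrow>
    forced j (omega k @ [1, 5, 2], [[2*k+4, 3], [2*k+7, 2*k+6]], [2*k+8..<2*j+6], [])"
| pair_taken: "k < j \<Longrightarrow>
    forced j (omega k @ [1, 5, 2], [[2*k+4, 3], [2*k+6]], (2*k+7) # [2*k+8..<2*j+6], [])"
| pair_taken2: "k < j \<Longrightarrow>
    forced j (omega k @ [1, 5, 2], [[2*k+4, 3], []], [2*k+6..<2*j+6], [])"

lemma forced_output_doomed:
  assumes "forced j (inp, D, x # I, out)" shows "doomed (inp, D, I, out @ [x])"
  using assms
proof cases
  case (round i)
  then show ?thesis
    by (intro doomed_by_output[where y=1]) (auto simp: eq_commute[of "x # I"] upt_eq_Cons_conv)
next
  case (pair_read k)
  then show ?thesis
    by (intro doomed_by_output[where y=1]) (auto simp: eq_commute[of "x # I"] upt_eq_Cons_conv)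
next
  case (pair_read2 k)
  then show ?thesis
    by (intro doomed_by_output[where y=1]) (auto simp: eq_commute[of "x # I"] upt_eq_Cons_conv)
next
  case (pair_moved k)
  then show ?thesis
    by (intro doomed_by_output[where y=1]) (auto simp: eq_commute[of "x # I"] upt_eq_Cons_conv)
next
  case (pair_taken k)
  then show ?thesis
    by (intro doomed_by_output[where y=1]) (auto simp: eq_commute[of "x # I"] upt_eq_Cons_conv)
next
  case (pair_taken2 k)
  then show ?thesis
    by (intro doomed_by_output[where y=1]) (auto simp: eq_commute[of "x # I"] upt_eq_Cons_conv)
qed

lemma forced_read:
  assumes "forced j (x # inp, [a, b], I, out)" "a = [] \<or> hd a < x"
  shows "forced j (inp, [x # a, b], I, out)"
  using assms(1)
proof cases
  case start
  then show ?thesis using forced.top_read[of j] by (simp add: alpha_def)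
next
  case top_read
  with assms(2) show ?thesis by simp
next
  case top_moved
  then show ?thesis using forced.round[of j j] by simp
next
  case (round i)
  with assms(2) show ?thesis
    using forced.pair_read[of "i - 1" j] by (cases i) (auto simp: omega_Suc add.commute)
next
  case (pair_read k)
  then show ?thesis using forced.pair_read2[of k j] by simp
qed (use assms(2) omega_tail_hd_le[of x inp] in fastforce)+

lemma forced_move:
  assumes "forced j (inp, [x # a, b], I, out)" "b = [] \<or> hd b < x"
  shows "forced j (inp, [a, x # b], I, out)"
  using assms(1)
proof cases
  case top_read
  then show ?thesis using forced.top_moved[of j] by simp
next
  case (pair_read2 k)
  then show ?thesis using forced.pair_moved[of k j] by simp
next
  case (pair_taken2 k)
  then show ?thesis using forced.round[of k j] by simp
qed (use assms(2) in auto)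

lemma forced_take:
  assumes "forced j (inp, [a, x # b], I, out)" "I = [] \<or> x < hd I"
  shows "forced j (inp, [a, b], x # I, out) \<or> doomed (inp, [a, b], x # I, out)"
  using assms(1)
proof cases
  case top_moved
  then show ?thesis
    using subseq_omega_tail[of j] by (auto intro!: doomed_by_block[of "2*j+4" _ 2 "2*j+5"])
next
  case (round i)
  then show ?thesis
    using subseq_omega_tail[of i] by (auto intro!: doomed_by_block[of "2*i+4" _ 2 "2*i+5"])
next
  case (pair_read k)
  then show ?thesis
    by (auto intro!: doomed_by_block[of "2*k+6" _ 2 "2*k+7"] simp: subseq_singleton_left)
next
  case (pair_read2 k)
  then show ?thesis
    by (auto intro!: doomed_by_block[of "2*k+6" _ 2 "2*k+7"] simp: subseq_singleton_left)
next
  case (pair_moved k)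
  then show ?thesis using forced.pair_taken[of k j] by simp
next
  case (pair_taken k)
  then show ?thesis using forced.pair_taken2[of k j] by (simp add: upt_conv_Cons add.commute)
qed

lemma forced_step:
  assumes "forced j s" "mstep 2 s t" shows "forced j t \<or> doomed t"
proof -
  obtain inp a b I out where s: "s = (inp, [a, b], I, out)"
    using assms(1) by cases auto
  from assms(2)[unfolded s] show ?thesis
  proof (cases rule: mstep2E)
    case d0 then show ?thesis using forced_read assms(1) s by simp
  next
    case d1 then show ?thesis using forced_move assms(1) s by simp
  next
    case d2 then show ?thesis using forced_take assms(1) s by simp
  next
    case d3 then show ?thesis using forced_output_doomed assms(1) s by simp
  qed
qed

lemma reachable_forced_or_doomed:
  assumes "(mstep 2)\<^sup>*\<^sup>* (alpha j, replicate 2 [], [], []) s"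
  shows "forced j s \<or> doomed s"
  using assms
proof (induction rule: rtranclp_induct)
  case base
  then show ?case using forced.start by (simp add: numeral_2_eq_2)
next
  case (step s t)
  then show ?case using forced_step mstep_doomed reachable_invariants(1) by blast
qed

lemma not_sortable_alpha: "\<not> sortable 2 (alpha j)"
proof
  assume "sortable 2 (alpha j)"
  then obtain D I where run: "(mstep 2)\<^sup>*\<^sup>* (alpha j, replicate 2 [], [], []) ([], D, I, sort (alpha j))"
    unfolding sortable_def by blast
  from reachable_invariants(2)[OF run] have "mset (concat D) + mset I = {#}"
    by (simp add: mset_concat)
  then have "concat (rev D) = []" "I = []" by simp_all
  moreover have "\<not> forced j ([], D, I, sort (alpha j))" by (auto elim: forced.cases simp: alpha_def)
  ultimately show False using reachable_forced_or_doomed[OF run] by (auto simp: doomed.simps)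
qed

section \<open>Every one-point deletion of alpha j is 2-sortable\<close>

definition omega_above :: "nat \<Rightarrow> nat \<Rightarrow> nat list" where
  "omega_above i k = concat (map (\<lambda>m. [2*m+2, 2*m+5]) (rev [Suc i..<Suc k]))"

lemma omega_above_self [simp]: "omega_above k k = []"
  by (simp add: omega_above_def)

lemma omega_above_Suc: "i \<le> k \<Longrightarrow> omega_above i (Suc k) = [2*k+4, 2*k+7] @ omega_above i k"
  by (simp add: omega_above_def)

lemma omega_eq_above: "i \<le> k \<Longrightarrow> omega k = omega_above i k @ omega i"
  by (induction k) (auto simp: omega_Suc omega_above_Suc le_Suc_eq)

lemma length_omega_above: "i \<le> k \<Longrightarrow> length (omega_above i k) = 2*(k - i)"
  by (induction k) (auto simp: omega_above_Suc le_Suc_eq)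

lemma steps_omega_above:
  assumes "X = [] \<or> hd X < 4" "Y = [] \<or> hd Y < 4" "Z = [] \<or> B \<le> hd Z"
  shows "i \<le> k \<Longrightarrow> 2*k+6 \<le> B \<Longrightarrow> (mstep 2)\<^sup>*\<^sup>*
           (omega_above i k @ rest, [(2*k+4) # X, Y], [2*k+6..<B] @ Z, out)
           (rest, [(2*i+4) # X, Y], [2*i+6..<B] @ Z, out)"
proof (induction k)
  case (Suc k)
  show ?case
  proof (cases "i = Suc k")
    case False
    with Suc.prems have "i \<le> k" by simp
    have "X = [] \<or> hd X < 2*k+4" "Y = [] \<or> hd Y < 2*k+6"
      using assms by auto
    moreover have "[2*k+8..<B] @ Z = [] \<or> 2*k+7 < hd ([2*k+8..<B] @ Z)"
      using assms(3) Suc.prems by (cases "2*k+8 < B") (auto simp: upt_conv_Cons)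
    ultimately have "exec_ops 2 [1,0,0,1,2,2]
        (omega_above i (Suc k) @ rest, [(2 * Suc k + 4) # X, Y], [2 * Suc k + 6..<B] @ Z, out)
      = Some (omega_above i k @ rest, [(2*k+4) # X, Y], [2*k+6..<B] @ Z, out)"
      using \<open>i \<le> k\<close> Suc.prems by (simp add: omega_above_Suc upt_conv_Cons add.commute)
    then have "(mstep 2)\<^sup>*\<^sup>*
        (omega_above i (Suc k) @ rest, [(2 * Suc k + 4) # X, Y], [2 * Suc k + 6..<B] @ Z, out)
        (omega_above i k @ rest, [(2*k+4) # X, Y], [2*k+6..<B] @ Z, out)"
      by (rule exec_ops_steps)
    also have "(mstep 2)\<^sup>*\<^sup>* \<dots> (rest, [(2*i+4) # X, Y], [2*i+6..<B] @ Z, out)"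
      using Suc.IH \<open>i \<le> k\<close> Suc.prems by simp
    finally show ?thesis .
  qed simp
qed simp

lemma sorts_from_endgames:
  assumes "sorted I" "\<forall>x \<in> set I. 5 < x"
  shows "sorts_from 2 ([5, 2], [[4, 3], []], I, [])"
    and "sorts_from 2 ([1, 2], [[4, 3], []], I, [])"
    and "sorts_from 2 ([1, 5], [[4, 3], []], I, [])"
    and "sorts_from 2 ([1, 5, 2], [[4], [3]], I, [])"
    and "sorts_from 2 ([1, 5, 2], [[4], []], I, [])"
    and "sorts_from 2 ([1, 5, 2], [[], [3]], I, [])"
proof -
  have I: "I = [] \<or> 5 < hd I" "I = [] \<or> 4 < hd I" using assms(2) by (cases I; simp)+
  have finish: "sorts_from 2 ([], [[], []], xs @ I, out)"
    if "sorted (out @ xs)" "\<forall>x \<in> set (out @ xs). x \<le> 5" for xs out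
  proof -
    have "x \<le> y" if "x \<in> set (out @ xs)" "y \<in> set I" for x y
    proof -
      have "x \<le> 5" "5 < y" using that \<open>\<forall>x \<in> set (out @ xs). x \<le> 5\<close> assms(2) by auto
      then show ?thesis by simp
    qed
    with \<open>sorted (out @ xs)\<close> assms(1) have "sorted ((out @ xs) @ I)"
      unfolding sorted_append[of "out @ xs" I] by blast
    then show ?thesis by (intro sorts_from2I) simp
  qed
  show "sorts_from 2 ([5, 2], [[4, 3], []], I, [])"
    by (rule sorts_from_exec_ops[of 2 "[1,0,1,2,2,1,2,0,1,2]" _ "([], [[], []], [2,3,4,5] @ I, [])"],
        use I in simp, rule finish, simp_all)
  show "sorts_from 2 ([1, 2], [[4, 3], []], I, [])"
    by (rule sorts_from_exec_ops[of 2 "[1,2,1,2,0,1,2,3,0,1,2]" _ "([], [[], []], [2,3,4] @ I, [1])"],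
        use I in simp, rule finish, simp_all)
  show "sorts_from 2 ([1, 5], [[4, 3], []], I, [])"
    by (rule sorts_from_exec_ops[of 2 "[1,2,1,2,0,1,2,3,3,3,0,1,2]" _ "([], [[], []], [5] @ I, [1,3,4])"],
        use I in simp, rule finish, simp_all)
  show "sorts_from 2 ([1, 5, 2], [[4], [3]], I, [])"
    by (rule sorts_from_exec_ops[of 2 "[1,0,0,1,2,2,2,1,2,3,0,1,2]" _ "([], [[], []], [2,3,4,5] @ I, [1])"],
        use I in simp, rule finish, simp_all)
  show "sorts_from 2 ([1, 5, 2], [[4], []], I, [])"
    by (rule sorts_from_exec_ops[of 2 "[1,0,0,1,2,2,1,2,3,0,1,2]" _ "([], [[], []], [2,4,5] @ I, [1])"],
        use I in simp, rule finish, simp_all)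
  show "sorts_from 2 ([1, 5, 2], [[], [3]], I, [])"
    by (rule sorts_from_exec_ops[of 2 "[0,0,1,2,2,1,2,3,0,1,2]" _ "([], [[], []], [2,3,5] @ I, [1])"],
        use I in simp, rule finish, simp_all)
qed

lemma sorts_from_omega_above:
  assumes "X = [] \<or> hd X < 4" "Y = [] \<or> hd Y < 4" "Z = [] \<or> B \<le> hd Z" "i \<le> k" "2*k+6 \<le> B"
    and "sorts_from 2 (rest, [(2*i+4) # X, Y], [2*i+6..<B] @ Z, out)"
  shows "sorts_from 2 (omega_above i k @ rest, [(2*k+4) # X, Y], [2*k+6..<B] @ Z, out)"
  using steps_omega_above[OF assms(1-5)] assms(6) by (rule sorts_from_steps)

lemma sorts_from_omega_with_3:
  assumes "sorted Z" "\<forall>z \<in> set Z. B \<le> z" "2*r+6 \<le> B"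
  shows "sorts_from 2 (omega r @ [1, 5, 2], [[2*r+4], [3]], [2*r+6..<B] @ Z, [])"
proof -
  have "sorts_from 2 ([1, 5, 2], [[4], [3]], [6..<B] @ Z, [])"
    using assms by (intro sorts_from_endgames(4)) (auto simp: sorted_append)
  then show ?thesis
    using sorts_from_omega_above[of "[]" "[3]" Z B 0 r] omega_eq_above[of 0 r] assms
    by (cases Z) auto
qed

lemma sorts_from_omega_only_3:
  assumes "r \<le> q" shows "sorts_from 2 (omega r @ [1, 5, 2], [[], [3]], [2*r+6..<2*q+8], [])"
proof (cases r)
  case 0
  have "sorts_from 2 ([1, 5, 2], [[], [3]], [6..<2*q+8], [])" by (rule sorts_from_endgames(6)) auto
  with 0 show ?thesis by simp
next
  case (Suc s)
  have "exec_ops 2 [0,0,1,2] (omega r @ [1, 5, 2], [[], [3]], [2*r+6..<2*q+8], [])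
      = Some (omega s @ [1, 5, 2], [[2*s+4], [3]], [2*s+6..<2*s+6] @ [2*s+7..<2*q+8], [])"
    using Suc assms by (simp add: omega_Suc upt_conv_Cons add.commute)
  moreover have "sorts_from 2 (omega s @ [1, 5, 2], [[2*s+4], [3]], [2*s+6..<2*s+6] @ [2*s+7..<2*q+8], [])"
    by (rule sorts_from_omega_with_3) auto
  ultimately show ?thesis by (rule sorts_from_exec_ops)
qed

lemma sorts_from_prefix:
  assumes "i \<le> q" "sorts_from 2 (rest, [[2*i+4, 3], []], [2*i+6..<2*q+8], [])"
  shows "sorts_from 2 ((2*q+6) # 3 # omega_above i (Suc q) @ rest, [[], []], [], [])"
proof -
  have "exec_ops 2 [0,1,0,0,0,1,2,2] ((2*q+6) # 3 # omega_above i (Suc q) @ rest, [[], []], [], [])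
      = Some (omega_above i q @ rest, [[2*q+4, 3], []], [2*q+6..<2*q+8] @ [], [])"
    using assms(1) by (simp add: omega_above_Suc upt_conv_Cons)
  moreover have "sorts_from 2 (omega_above i q @ rest, [[2*q+4, 3], []], [2*q+6..<2*q+8] @ [], [])"
    using sorts_from_omega_above[of "[3]" "[]" "[]" "2*q+8" i q rest "[]"] assms by simp
  ultimately show ?thesis by (rule sorts_from_exec_ops)
qed

lemma sorts_from_delete_first: "sorts_from 2 (3 # omega (Suc q) @ [1, 5, 2], [[], []], [], [])"
proof -
  have "exec_ops 2 [0,1,0,0,1,2] (3 # omega (Suc q) @ [1, 5, 2], [[], []], [], [])
      = Some (omega q @ [1, 5, 2], [[2*q+4], [3]], [2*q+6..<2*q+6] @ [2*q+7], [])"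
    by (simp add: omega_Suc)
  moreover have "sorts_from 2 (omega q @ [1, 5, 2], [[2*q+4], [3]], [2*q+6..<2*q+6] @ [2*q+7], [])"
    by (rule sorts_from_omega_with_3) auto
  ultimately show ?thesis by (rule sorts_from_exec_ops)
qed

lemma sorts_from_delete_second: "sorts_from 2 ((2*q+6) # omega (Suc q) @ [1, 5, 2], [[], []], [], [])"
proof -
  have run: "exec_ops 2 [0,1,0,0,1,2,2] ((2*q+6) # omega (Suc q) @ [1, 5, 2], [[], []], [], [])
      = Some (omega_above 0 q @ [1, 5, 2], [[2*q+4], []], [2*q+6..<2*q+8] @ [], [])"
    using omega_eq_above[of 0 q] by (simp add: omega_Suc upt_conv_Cons)
  have "sorts_from 2 ([1, 5, 2], [[4], []], [6..<2*q+8], [])"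
    by (rule sorts_from_endgames(5)) auto
  then have "sorts_from 2 (omega_above 0 q @ [1, 5, 2], [[2*q+4], []], [2*q+6..<2*q+8] @ [], [])"
    by (intro sorts_from_omega_above) auto
  with run show ?thesis by (rule sorts_from_exec_ops)
qed

lemma sorts_from_delete_tail:
  assumes "Rs \<in> {[5, 2], [1, 2], [1, 5]}"
  shows "sorts_from 2 ((2*q+6) # 3 # omega (Suc q) @ Rs, [[], []], [], [])"
proof -
  have "sorts_from 2 (Rs, [[4, 3], []], [6..<2*q+8], [])"
    using assms sorts_from_endgames(1-3)[of "[6..<2*q+8]"] by auto
  then show ?thesis using sorts_from_prefix[of 0 q Rs] omega_eq_above[of 0 "Suc q"] by simp
qed

lemma sorts_from_delete_pair_fst:
  assumes "r \<le> q"
  shows "sorts_from 2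
    ((2*q+6) # 3 # omega_above (Suc r) (Suc q) @ (2*r+7) # omega r @ [1, 5, 2], [[], []], [], [])"
proof (cases "r = q")
  case True
  have "exec_ops 2 [0,1,0,0,1,2,2,1] ((2*q+6) # 3 # (2*q+7) # omega q @ [1, 5, 2], [[], []], [], [])
      = Some (omega q @ [1, 5, 2], [[], [3]], [2*q+6..<2*q+8], [])"
    by (simp add: upt_conv_Cons)
  then have "sorts_from 2 ((2*q+6) # 3 # (2*q+7) # omega q @ [1, 5, 2], [[], []], [], [])"
    using sorts_from_omega_only_3[OF order_refl] by (rule sorts_from_exec_ops)
  with True show ?thesis by simp
next
  case False
  have "exec_ops 2 [1,0,1,2,2,1] ((2*r+7) # omega r @ [1, 5, 2], [[2*r+6, 3], []], [2*r+8..<2*q+8], [])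
      = Some (omega r @ [1, 5, 2], [[], [3]], [2*r+6..<2*q+8], [])"
    using assms False by (simp add: upt_conv_Cons)
  then have "sorts_from 2 ((2*r+7) # omega r @ [1, 5, 2], [[2*r+6, 3], []], [2*r+8..<2*q+8], [])"
    using sorts_from_omega_only_3[OF assms] by (rule sorts_from_exec_ops)
  then show ?thesis using assms False sorts_from_prefix[of "Suc r" q] by (simp add: add.commute)
qed

lemma sorts_from_delete_pair_snd:
  assumes "r \<le> q"
  shows "sorts_from 2
    ((2*q+6) # 3 # omega_above (Suc r) (Suc q) @ (2*r+4) # omega r @ [1, 5, 2], [[], []], [], [])"
proof (cases "r = q")
  case True
  have "exec_ops 2 [0,1,2,0,1,0] ((2*q+6) # 3 # (2*q+4) # omega q @ [1, 5, 2], [[], []], [], [])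
      = Some (omega q @ [1, 5, 2], [[2*q+4], [3]], [2*q+6..<2*q+7] @ [], [])"
    by (simp add: upt_conv_Cons)
  then have "sorts_from 2 ((2*q+6) # 3 # (2*q+4) # omega q @ [1, 5, 2], [[], []], [], [])"
    by (rule sorts_from_exec_ops) (rule sorts_from_omega_with_3; simp)
  with True show ?thesis by simp
next
  case False
  have "exec_ops 2 [1,2,1,0] ((2*r+4) # omega r @ [1, 5, 2], [[2*r+6, 3], []], [2*r+8..<2*q+8], [])
      = Some (omega r @ [1, 5, 2], [[2*r+4], [3]], [2*r+6..<2*r+7] @ [2*r+8..<2*q+8], [])"
    using assms False by (simp add: upt_conv_Cons)
  then have "sorts_from 2 ((2*r+4) # omega r @ [1, 5, 2], [[2*r+6, 3], []], [2*r+8..<2*q+8], [])"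
    by (rule sorts_from_exec_ops) (rule sorts_from_omega_with_3; simp)
  then show ?thesis using assms False sorts_from_prefix[of "Suc r" q] by (simp add: add.commute)
qed

lemma delete_at_append: "delete_at (length xs + i) (xs @ ys) = xs @ delete_at i ys"
  by (simp add: delete_at_def)

lemma alpha_Suc_position_cases:
  fixes p q :: nat
  assumes "p < 2*q+7"
  obtains "p = 0" | "p = 1"
    | r i where "r \<le> q" "i < 2" "p = 2 + 2*(q-r) + i"
    | i where "i < 3" "p = 2*q+4 + i"
proof -
  consider "p < 2" | "2 \<le> p" "p < 2*q+4" | "2*q+4 \<le> p" by linarith
  then show thesis
  proof cases
    case 2
    then have "p = 2 + 2*(q - (q - (p-2) div 2)) + (p-2) mod 2" by simp
    with that(3)[of "q - (p-2) div 2" "(p-2) mod 2"] show thesis by simp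
  next
    case 3
    with that(4)[of "p - (2*q+4)"] assms show thesis by simp
  qed (use that in linarith)
qed

lemma delete_at_alpha_Suc_cases:
  assumes "p < 2*q+7"
  obtains (first) "delete_at p (alpha (Suc q)) = 3 # omega (Suc q) @ [1, 5, 2]"
  | (second) "delete_at p (alpha (Suc q)) = (2*q+6) # omega (Suc q) @ [1, 5, 2]"
  | (pair_fst) r where "r \<le> q" "delete_at p (alpha (Suc q)) =
      (2*q+6) # 3 # omega_above (Suc r) (Suc q) @ (2*r+7) # omega r @ [1, 5, 2]"
  | (pair_snd) r where "r \<le> q" "delete_at p (alpha (Suc q)) =
      (2*q+6) # 3 # omega_above (Suc r) (Suc q) @ (2*r+4) # omega r @ [1, 5, 2]"
  | (tail) Rs where "Rs \<in> {[5, 2], [1, 2], [1, 5]}"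
      "delete_at p (alpha (Suc q)) = (2*q+6) # 3 # omega (Suc q) @ Rs"
proof -
  have alpha: "alpha (Suc q) = (2*q+6) # 3 # omega (Suc q) @ [1, 5, 2]" by (simp add: alpha_def)
  from assms show thesis
  proof (cases rule: alpha_Suc_position_cases)
    case 1
    then show thesis using first by (simp add: alpha delete_at_def)
  next
    case 2
    then show thesis using second by (simp add: alpha delete_at_def)
  next
    case (3 r i)
    let ?pre = "(2*q+6) # 3 # omega_above (Suc r) (Suc q)"
    have "alpha (Suc q) = ?pre @ [2*r+4, 2*r+7] @ omega r @ [1, 5, 2]"
      using omega_eq_above[of "Suc r" "Suc q"] 3 by (simp add: alpha omega_Suc)
    moreover have "p = length ?pre + i" using 3 by (simp add: length_omega_above)
    ultimately have del:
      "delete_at p (alpha (Suc q)) = ?pre @ delete_at i ([2*r+4, 2*r+7] @ omega r @ [1, 5, 2])"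
      by (simp only: delete_at_append)
    consider "i = 0" | "i = 1" using 3 by linarith
    then show thesis
    proof cases
      case 1
      with del 3 show thesis by (intro pair_fst[of r]) (simp_all add: delete_at_def)
    next
      case 2
      with del 3 show thesis by (intro pair_snd[of r]) (simp_all add: delete_at_def)
    qed
  next
    case (4 i)
    have "alpha (Suc q) = ((2*q+6) # 3 # omega (Suc q)) @ [1, 5, 2]" by (simp add: alpha)
    moreover have "p = length ((2*q+6) # 3 # omega (Suc q)) + i" using 4 by (simp add: length_omega)
    ultimately have
      "delete_at p (alpha (Suc q)) = (2*q+6) # 3 # omega (Suc q) @ delete_at i [1, 5, 2]"
      by (simp only: delete_at_append) simp
    moreover have "delete_at i [1, 5, 2] \<in> {[5, 2], [1, 2], [1, 5]}"
    proof -
      consider "i = 0" | "i = 1" | "i = 2" using 4 by linarith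
      then show ?thesis by cases (simp_all add: delete_at_def)
    qed
    ultimately show thesis by (rule tail[rotated])
  qed
qed

lemma sorts_from_delete_alpha_Suc:
  assumes "p < 2*q+7"
  shows "sorts_from 2 (delete_at p (alpha (Suc q)), [[], []], [], [])"
  using assms
proof (cases rule: delete_at_alpha_Suc_cases)
  case first
  then show ?thesis using sorts_from_delete_first by simp
next
  case second
  then show ?thesis using sorts_from_delete_second by simp
next
  case (pair_fst r)
  then show ?thesis using sorts_from_delete_pair_fst by simp
next
  case (pair_snd r)
  then show ?thesis using sorts_from_delete_pair_snd by simp
next
  case (tail Rs)
  then show ?thesis using sorts_from_delete_tail by simp
qed

lemma sorts_from_delete_alpha_0:
  assumes "p < 5" shows "sorts_from 2 (delete_at p (alpha 0), [[], []], [], [])"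
proof -
  have alpha: "alpha 0 = [4, 3, 1, 5, 2]" by (simp add: alpha_def)
  consider "p = 0" | "p = 1" | "p = 2" | "p = 3" | "p = 4" using assms by linarith
  then show ?thesis
  proof cases
    case 1
    have "sorts_from 2 ([1, 5, 2], [[], [3]], [], [])" by (rule sorts_from_endgames(6)) simp_all
    with 1 show ?thesis
      by (simp add: alpha delete_at_def) (rule sorts_from_exec_ops[of 2 "[0,1]"], simp_all)
  next
    case 2
    have "sorts_from 2 ([1, 5, 2], [[4], []], [], [])" by (rule sorts_from_endgames(5)) simp_all
    with 2 show ?thesis
      by (simp add: alpha delete_at_def) (rule sorts_from_exec_ops[of 2 "[0]"], simp_all)
  next
    case 3
    have "sorts_from 2 ([], [[], []], [2, 3, 4, 5], [])" by (rule sorts_from2I) simp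
    with 3 show ?thesis
      by (simp add: alpha delete_at_def)
        (rule sorts_from_exec_ops[of 2 "[0,1,0,0,1,2,2,1,2,0,1,2]"], simp_all)
  next
    case 4
    have "sorts_from 2 ([], [[], []], [2, 3, 4], [1])" by (rule sorts_from2I) simp
    with 4 show ?thesis
      by (simp add: alpha delete_at_def)
        (rule sorts_from_exec_ops[of 2 "[0,1,2,0,1,2,0,1,2,3,0,1,2]"], simp_all)
  next
    case 5
    have "sorts_from 2 ([], [[], []], [5], [1, 3, 4])" by (rule sorts_from2I) simp
    with 5 show ?thesis
      by (simp add: alpha delete_at_def)
        (rule sorts_from_exec_ops[of 2 "[0,1,2,0,1,2,0,1,2,3,3,3,0,1,2]"], simp_all)
  qed
qed

lemma sortable_delete_at_alpha:
  assumes "p < length (alpha j)" shows "sortable 2 (delete_at p (alpha j))"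
proof -
  have "sorts_from 2 (delete_at p (alpha j), [[], []], [], [])"
    using assms sorts_from_delete_alpha_0 sorts_from_delete_alpha_Suc
    by (cases j) (simp_all add: length_alpha)
  then show ?thesis by (intro sortable_if_sorts_from) (simp add: numeral_2_eq_2)
qed

lemma alpha_antichain:
  assumes "i \<noteq> j" shows "\<not> pattern_le (alpha i) (alpha j)"
proof
  assume le: "pattern_le (alpha i) (alpha j)"
  with assms have "length (alpha i) < length (alpha j)"
    using pattern_le_length[OF le] by (simp add: length_alpha)
  with le obtain p where "p < length (alpha j)" "pattern_le (alpha i) (delete_at p (alpha j))"
    using pattern_le_delete_at by blast
  then have "sortable 2 (alpha i)"
    using sortable_pattern_le distinct_delete_at[OF distinct_alpha] sortable_delete_at_alpha by blast
  with not_sortable_alpha show False by blast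
qed

theorem mainTheorem3:
  shows "infinite (range alpha)
     \<and> (\<forall>i j. i \<noteq> j \<longrightarrow> \<not> pattern_le (alpha i) (alpha j))
     \<and> (\<forall>j. \<not> sortable 2 (alpha j))
     \<and> (\<forall>j. \<forall>p < length (alpha j). sortable 2 (standardize (delete_at p (alpha j))))"
proof (intro conjI allI impI)
  have "inj alpha" by (rule injI) (metis length_alpha add_right_cancel mult_cancel_left zero_neq_numeral)
  then show "infinite (range alpha)" using finite_imageD by blast
next
  fix j p assume "p < length (alpha j)"
  then show "sortable 2 (standardize (delete_at p (alpha j)))"
    using sortable_order_iso[OF order_iso_standardize] distinct_delete_at[OF distinct_alpha]
      sortable_delete_at_alpha by blast
qed (use alpha_antichain not_sortable_alpha in blast)+

end
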